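(* Let $X$ be a consonant Wilker space. Then $\Sigma\mathcal O(X)$ is sober.
   Context: $\mathcal O(X)$ is the lattice of open subsets of $X$ ordered by inclusion and $\Sigma\mathcal O(X)$ is this lattice with its Scott topology (a family $\mathcal F$ is Scott open iff it is an upper set and for every directed family $\mathcal D$ of open sets, $\bigcup\mathcal D\in\mathcal F$ implies $\mathcal D\cap\mathcal F\neq\emptyset$). $X$ is a Wilker space if for any open sets $U_1,U_2$ and compact set $K$ with $K\subseteq U_1\cup U_2$ there are compact sets $K_1\subseteq U_1$, $K_2\subseteq U_2$ with $K\subseteq K_1\cup K_2$. A $T_0$ space $X$ is consonant if for every Scott open $\mathcal F\subseteq\mathcal O(X)$ and every $U\in\mathcal F$ there is a compact saturated set $Q$ (saturated = upper set in the specialization order) with $U\in\Phi(Q)\subseteq\mathcal F$, where $\Phi(Q)=\{V\in\mathcal O(X)\mid Q\subseteq V\}$. A $T_0$ space is sober if every irreducible closed set equals $\overline{\{x\}}$ for some point $x$. *)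

theory Defs
  imports "HOL-Analysis.Analysis"
begin

definition opens_of :: "'a topology \<Rightarrow> 'a set set" where
  "opens_of X = {U. openin X U}"

definition directed_opens :: "'a topology \<Rightarrow> 'a set set \<Rightarrow> bool" where
  "directed_opens X D \<longleftrightarrow> D \<noteq> {} \<and> D \<subseteq> opens_of X \<and>
     (\<forall>U\<in>D. \<forall>V\<in>D. \<exists>W\<in>D. U \<subseteq> W \<and> V \<subseteq> W)"

definition scott_open :: "'a topology \<Rightarrow> 'a set set \<Rightarrow> bool" where
  "scott_open X F \<longleftrightarrow> F \<subseteq> opens_of X \<and>
     (\<forall>U\<in>F. \<forall>V. openin X V \<and> U \<subseteq> V \<longrightarrow> V \<in> F) \<and>
     (\<forall>D. directed_opens X D \<and> \<Union>D \<in> F \<longrightarrow> D \<inter> F \<noteq> {})"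

definition scott_opens_space :: "'a topology \<Rightarrow> 'a set topology" where
  "scott_opens_space X = topology (scott_open X)"

lemma istopology_scott_open: "istopology (scott_open X)"
  unfolding istopology_def
proof (intro conjI allI impI)
  fix S T assume S: "scott_open X S" and T: "scott_open X T"
  show "scott_open X (S \<inter> T)"
    unfolding scott_open_def
  proof (intro conjI allI impI ballI)
    show "S \<inter> T \<subseteq> opens_of X" using S by (auto simp: scott_open_def)
  next
    fix U V assume "U \<in> S \<inter> T" "openin X V \<and> U \<subseteq> V"
    then show "V \<in> S \<inter> T" using S T by (auto simp: scott_open_def)
  next
    fix D assume D: "directed_opens X D \<and> \<Union>D \<in> S \<inter> T"
    have "D \<inter> S \<noteq> {}" using D S by (auto simp: scott_open_def)
    then obtain U where U: "U \<in> D" "U \<in> S" by blast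
    have "D \<inter> T \<noteq> {}" using D T by (auto simp: scott_open_def)
    then obtain V where V: "V \<in> D" "V \<in> T" by blast
    obtain W where W: "W \<in> D" "U \<subseteq> W" "V \<subseteq> W"
      using D U(1) V(1) unfolding directed_opens_def by blast
    have "openin X W" using W D by (auto simp: directed_opens_def opens_of_def)
    then have "W \<in> S" "W \<in> T" using S T U V W by (auto simp: scott_open_def)
    then show "D \<inter> (S \<inter> T) \<noteq> {}" using W by auto
  qed
next
  fix K assume K: "\<forall>S\<in>K. scott_open X S"
  show "scott_open X (\<Union>K)"
    unfolding scott_open_def
  proof (intro conjI allI impI ballI)
    show "\<Union>K \<subseteq> opens_of X" using K by (auto simp: scott_open_def)
  next
    fix U V assume "U \<in> \<Union>K" "openin X V \<and> U \<subseteq> V"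
    then show "V \<in> \<Union>K" using K by (auto simp: scott_open_def)
  next
    fix D assume D: "directed_opens X D \<and> \<Union>D \<in> \<Union>K"
    then obtain S where "S \<in> K" "\<Union>D \<in> S" by auto
    then have "D \<inter> S \<noteq> {}" using K D by (auto simp: scott_open_def)
    then show "D \<inter> \<Union>K \<noteq> {}" using \<open>S \<in> K\<close> by auto
  qed
qed

lemma openin_scott_opens_space:
  "openin (scott_opens_space X) F \<longleftrightarrow> scott_open X F"
  by (simp add: scott_opens_space_def istopology_scott_open)

definition specializes :: "'a topology \<Rightarrow> 'a \<Rightarrow> 'a \<Rightarrow> bool" where
  "specializes X x y \<longleftrightarrow> x \<in> topspace X \<and> y \<in> topspace X \<and>
     (\<forall>U. openin X U \<and> x \<in> U \<longrightarrow> y \<in> U)"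

definition saturated_in :: "'a topology \<Rightarrow> 'a set \<Rightarrow> bool" where
  "saturated_in X Q \<longleftrightarrow> Q \<subseteq> topspace X \<and> (\<forall>x\<in>Q. \<forall>y. specializes X x y \<longrightarrow> y \<in> Q)"

definition Phi :: "'a topology \<Rightarrow> 'a set \<Rightarrow> 'a set set" where
  "Phi X Q = {V. openin X V \<and> Q \<subseteq> V}"

definition wilker_space :: "'a topology \<Rightarrow> bool" where
  "wilker_space X \<longleftrightarrow> (\<forall>U1 U2 K. openin X U1 \<and> openin X U2 \<and> compactin X K \<and> K \<subseteq> U1 \<union> U2 \<longrightarrow>
     (\<exists>K1 K2. compactin X K1 \<and> compactin X K2 \<and> K1 \<subseteq> U1 \<and> K2 \<subseteq> U2 \<and> K \<subseteq> K1 \<union> K2))"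

definition consonant_space :: "'a topology \<Rightarrow> bool" where
  "consonant_space X \<longleftrightarrow> t0_space X \<and>
     (\<forall>F U. scott_open X F \<and> U \<in> F \<longrightarrow>
        (\<exists>Q. compactin X Q \<and> saturated_in X Q \<and> U \<in> Phi X Q \<and> Phi X Q \<subseteq> F))"

definition irreducible_closed :: "'b topology \<Rightarrow> 'b set \<Rightarrow> bool" where
  "irreducible_closed Y C \<longleftrightarrow> closedin Y C \<and> C \<noteq> {} \<and>
     (\<forall>A B. closedin Y A \<and> closedin Y B \<and> C \<subseteq> A \<union> B \<longrightarrow> C \<subseteq> A \<or> C \<subseteq> B)"

definition sober_space :: "'b topology \<Rightarrow> bool" where
  "sober_space Y \<longleftrightarrow> t0_space Y \<and>
     (\<forall>C. irreducible_closed Y C \<longrightarrow> (\<exists>x\<in>topspace Y. C = Y closure_of {x}))"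

end

theory Submission
  imports Defs
begin

text \<open>The Scott-closed sets of \<open>\<O>(X)\<close> are the lower sets closed under directed unions, and
  the closure of a point \<open>U\<close> is the down-set of \<open>U\<close>; so \<open>\<Sigma>\<O>(X)\<close> is always \<open>T\<^sub>0\<close>, and an
  irreducible Scott-closed set \<open>C\<close> is a point closure as soon as it is directed, its top
  element being \<open>\<Union>C\<close>. Directedness is where consonance and the Wilker property enter: if
  \<open>U, V \<in> C\<close> but \<open>U \<union> V \<notin> C\<close>, consonance gives a compact \<open>Q \<subseteq> U \<union> V\<close> with \<open>\<Phi>(Q)\<close> disjoint
  from \<open>C\<close>, and the Wilker property splits \<open>Q \<subseteq> K\<^sub>1 \<union> K\<^sub>2\<close> with compact \<open>K\<^sub>1 \<subseteq> U\<close>, \<open>K\<^sub>2 \<subseteq> V\<close>.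
  Then \<open>C\<close> is covered by the Scott-closed complements of \<open>\<Phi>(K\<^sub>1)\<close> and \<open>\<Phi>(K\<^sub>2)\<close>, although
  neither of them contains \<open>C\<close> (witnessed by \<open>U\<close> and \<open>V\<close>), contradicting irreducibility.\<close>

lemma directed_opens_finite_upper_bound:
  assumes "directed_opens X D" "finite F" "F \<subseteq> D"
  shows "\<exists>W\<in>D. \<Union>F \<subseteq> W"
  using assms(2,3)
proof (induction F rule: finite_induct)
  case empty
  then show ?case using assms(1) by (auto simp: directed_opens_def)
next
  case (insert U F)
  then obtain W where "W \<in> D" "\<Union>F \<subseteq> W" by auto
  moreover have "U \<in> D" using insert.prems by simp
  ultimately obtain W' where "W' \<in> D" "U \<subseteq> W'" "W \<subseteq> W'"
    using assms(1) unfolding directed_opens_def by meson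
  then show ?case using \<open>\<Union>F \<subseteq> W\<close> by blast
qed

lemma topspace_scott_opens_space: "topspace (scott_opens_space X) = opens_of X"
proof
  show "topspace (scott_opens_space X) \<subseteq> opens_of X"
    by (metis openin_scott_opens_space openin_topspace scott_open_def)
  have "scott_open X (opens_of X)"
    by (auto simp: scott_open_def opens_of_def directed_opens_def)
  then show "opens_of X \<subseteq> topspace (scott_opens_space X)"
    by (metis openin_scott_opens_space openin_subset)
qed

lemma closedin_scott_opens_space:
  "closedin (scott_opens_space X) C \<longleftrightarrow> C \<subseteq> opens_of X \<and> scott_open X (opens_of X - C)"
  by (simp add: closedin_def topspace_scott_opens_space openin_scott_opens_space)

lemma scott_closed_downward_closed:
  assumes "closedin (scott_opens_space X) C" "U \<in> C" "openin X W" "W \<subseteq> U"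
  shows "W \<in> C"
  using assms unfolding closedin_scott_opens_space scott_open_def opens_of_def by blast

lemma scott_closed_directed_Union_mem:
  assumes "closedin (scott_opens_space X) C" "directed_opens X C"
  shows "\<Union>C \<in> C"
proof (rule ccontr)
  assume "\<Union>C \<notin> C"
  moreover have "openin X (\<Union>C)"
    using assms(2) by (auto simp: directed_opens_def opens_of_def)
  ultimately have "\<Union>C \<in> opens_of X - C" by (simp add: opens_of_def)
  then have "C \<inter> (opens_of X - C) \<noteq> {}"
    using assms unfolding closedin_scott_opens_space scott_open_def by blast
  then show False by blast
qed

lemma scott_open_Phi:
  assumes "compactin X K"
  shows "scott_open X (Phi X K)"
  unfolding scott_open_def
proof (intro conjI allI impI ballI)
  show "Phi X K \<subseteq> opens_of X" by (auto simp: Phi_def opens_of_def)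
next
  fix U V assume "U \<in> Phi X K" "openin X V \<and> U \<subseteq> V"
  then show "V \<in> Phi X K" by (auto simp: Phi_def)
next
  fix D assume D: "directed_opens X D \<and> \<Union>D \<in> Phi X K"
  then have "\<forall>U\<in>D. openin X U" "K \<subseteq> \<Union>D"
    by (auto simp: directed_opens_def opens_of_def Phi_def)
  then obtain F where "finite F" "F \<subseteq> D" "K \<subseteq> \<Union>F"
    using assms unfolding compactin_def by meson
  moreover obtain W where "W \<in> D" "\<Union>F \<subseteq> W"
    using directed_opens_finite_upper_bound D \<open>finite F\<close> \<open>F \<subseteq> D\<close> by meson
  ultimately have "W \<in> D \<inter> Phi X K"
    using D by (auto simp: Phi_def directed_opens_def opens_of_def)
  then show "D \<inter> Phi X K \<noteq> {}" by blast
qed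

lemma closedin_scott_not_Phi:
  assumes "compactin X K"
  shows "closedin (scott_opens_space X) (opens_of X - Phi X K)"
proof -
  have "opens_of X - (opens_of X - Phi X K) = Phi X K"
    by (auto simp: Phi_def opens_of_def)
  then show ?thesis
    using scott_open_Phi[OF assms] by (simp add: closedin_scott_opens_space)
qed

lemma closedin_scott_down_set:
  "closedin (scott_opens_space X) {W. openin X W \<and> W \<subseteq> U}"
proof -
  have "opens_of X - {W. openin X W \<and> W \<subseteq> U} = {W. openin X W \<and> \<not> W \<subseteq> U}"
    by (auto simp: opens_of_def)
  moreover have "scott_open X {W. openin X W \<and> \<not> W \<subseteq> U}"
    by (auto simp: scott_open_def opens_of_def directed_opens_def)
  ultimately show ?thesis
    by (auto simp: closedin_scott_opens_space opens_of_def)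
qed

lemma scott_closure_of_singleton:
  assumes "openin X U"
  shows "scott_opens_space X closure_of {U} = {W. openin X W \<and> W \<subseteq> U}"
proof
  show "scott_opens_space X closure_of {U} \<subseteq> {W. openin X W \<and> W \<subseteq> U}"
    using assms by (intro closure_of_minimal closedin_scott_down_set) auto
  show "{W. openin X W \<and> W \<subseteq> U} \<subseteq> scott_opens_space X closure_of {U}"
  proof (intro subsetI)
    fix W assume "W \<in> {W. openin X W \<and> W \<subseteq> U}"
    then show "W \<in> scott_opens_space X closure_of {U}"
      using assms
      by (auto simp: in_closure_of topspace_scott_opens_space openin_scott_opens_space
            opens_of_def scott_open_def)
  qed
qed

lemma t0_space_scott_opens_space: "t0_space (scott_opens_space X)"
  unfolding t0_space_closure_of_sing topspace_scott_opens_space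
proof (intro ballI impI)
  fix U V assume "U \<in> opens_of X" "V \<in> opens_of X"
    and "scott_opens_space X closure_of {U} = scott_opens_space X closure_of {V}"
  then have "{W. openin X W \<and> W \<subseteq> U} = {W. openin X W \<and> W \<subseteq> V}"
    by (simp add: scott_closure_of_singleton opens_of_def)
  then show "U = V"
    using \<open>U \<in> opens_of X\<close> \<open>V \<in> opens_of X\<close> by (auto simp: opens_of_def)
qed

lemma irreducible_scott_closed_Un_mem:
  assumes "consonant_space X" "wilker_space X"
    and irr: "irreducible_closed (scott_opens_space X) C" and "U \<in> C" "V \<in> C"
  shows "U \<union> V \<in> C"
proof (rule ccontr)
  assume "U \<union> V \<notin> C"
  have C: "closedin (scott_opens_space X) C"
    using irr by (simp add: irreducible_closed_def)
  then have "openin X U" "openin X V"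
    using \<open>U \<in> C\<close> \<open>V \<in> C\<close> by (auto simp: closedin_scott_opens_space opens_of_def)
  with \<open>U \<union> V \<notin> C\<close> have "U \<union> V \<in> opens_of X - C" by (auto simp: opens_of_def)
  with C assms(1) obtain Q where Q: "compactin X Q" "U \<union> V \<in> Phi X Q" "Phi X Q \<inter> C = {}"
    unfolding consonant_space_def closedin_scott_opens_space by blast
  then have "Q \<subseteq> U \<union> V" by (simp add: Phi_def)
  with assms(2) obtain K1 K2 where K: "compactin X K1" "compactin X K2"
      "K1 \<subseteq> U" "K2 \<subseteq> V" "Q \<subseteq> K1 \<union> K2"
    using Q(1) \<open>openin X U\<close> \<open>openin X V\<close> unfolding wilker_space_def by metis
  have "C \<subseteq> (opens_of X - Phi X K1) \<union> (opens_of X - Phi X K2)"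
    using C Q(3) K(5) unfolding closedin_scott_opens_space Phi_def opens_of_def by blast
  then have "C \<subseteq> opens_of X - Phi X K1 \<or> C \<subseteq> opens_of X - Phi X K2"
    using irr closedin_scott_not_Phi K(1,2) unfolding irreducible_closed_def by blast
  moreover have "U \<in> Phi X K1" "V \<in> Phi X K2"
    using \<open>openin X U\<close> \<open>openin X V\<close> K(3,4) by (auto simp: Phi_def)
  ultimately show False using \<open>U \<in> C\<close> \<open>V \<in> C\<close> by blast
qed

theorem theorem4p18:
  fixes X :: "'a topology"
  assumes "consonant_space X" and "wilker_space X"
  shows "sober_space (scott_opens_space X)"
  unfolding sober_space_def
proof (intro conjI allI impI t0_space_scott_opens_space)
  fix C assume irr: "irreducible_closed (scott_opens_space X) C"
  then have C: "closedin (scott_opens_space X) C" "C \<noteq> {}"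
    by (auto simp: irreducible_closed_def)
  then have "C \<subseteq> opens_of X" by (simp add: closedin_scott_opens_space)
  with C(2) have "directed_opens X C"
    using irreducible_scott_closed_Un_mem[OF assms irr]
    unfolding directed_opens_def by blast
  with C(1) have top: "\<Union>C \<in> C" by (rule scott_closed_directed_Union_mem)
  then have "openin X (\<Union>C)" using \<open>C \<subseteq> opens_of X\<close> by (auto simp: opens_of_def)
  have "C = {W. openin X W \<and> W \<subseteq> \<Union>C}"
    using \<open>C \<subseteq> opens_of X\<close> scott_closed_downward_closed[OF C(1) top]
    by (auto simp: opens_of_def)
  also have "\<dots> = scott_opens_space X closure_of {\<Union>C}"
    by (simp add: scott_closure_of_singleton \<open>openin X (\<Union>C)\<close>)
  finally show "\<exists>x\<in>topspace (scott_opens_space X). C = scott_opens_space X closure_of {x}"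
    using top \<open>C \<subseteq> opens_of X\<close> by (auto simp: topspace_scott_opens_space)
qed

end
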